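(* Let $S_7\subseteq G^7$ be the stabilizer group generated by $g_1=IIIXXXX$, $g_2=IXXIIXX$, $g_3=XIXIXIX$, $g_4=IIIZZZZ$, $g_5=IZZIIZZ$, $g_6=ZIZIZIZ$ (tensor signs omitted, $j$-th letter acting on qubit $j$). Define $\phi:\mathbb{F}_2^6\to G^7$ by $\phi(\epsilon_1,\dots,\epsilon_6)=Z_a X_b$, where $a=4\epsilon_1+2\epsilon_2+\epsilon_3$, $b=4\epsilon_4+2\epsilon_5+\epsilon_6$, $Z_a$ (resp. $X_b$) denotes $Z$ (resp. $X$) on qubit $a$ (resp. $b$) and identity elsewhere, and $Z_0=X_0=I^{\otimes 7}$. Then $f_{S_7}(0)=f_{S_7}(1)=1$, $f_{S_7}(2)=\tfrac{9}{16}$, $f_{S_7}(3)=\tfrac{5}{16}$, $f_{S_7}(4)=\tfrac{5}{64}$, and $f_{S_7}(5)=f_{S_7}(6)=f_{S_7}(7)=0$.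
   Context: $X=\begin{pmatrix}0&1\\1&0\end{pmatrix}$, $Y=\begin{pmatrix}0&1\\-1&0\end{pmatrix}$, $Z=\begin{pmatrix}1&0\\0&-1\end{pmatrix}$. For a stabilizer group $S\subseteq G^n$ (abelian subgroup of the $n$-qubit Pauli group not containing $-I$) with independent generators $g_1,\dots,g_r$, the syndrome of a Pauli operator $g$ is $\epsilon(g)\in\mathbb{F}_2^r$, $\epsilon_i(g)=0$ if $g$ commutes with $g_i$ and $1$ if it anticommutes. For $\{m\}\subseteq\{1,\dots,n\}$, $P^{\{m\}}$ is the set of tensor products that are one of $I,X,Y,Z$ on each qubit of $\{m\}$ and $I$ elsewhere. Given an error correcting function $\phi:\mathbb{F}_2^r\to G^n$, call a syndrome $\epsilon\in\Sigma_{\{m\}}:=\{\epsilon(g):g\in P^{\{m\}}\}$ good for $\{m\}$ if $\phi(\epsilon)g\in\{\lambda s:s\in S,\lambda\in\{\pm1,\pm i\}\}$ for every $g\in P^{\{m\}}$ with $\epsilon(g)=\epsilon$. Define, for $t=0,\dots,n$, $$f_S(t)=\binom{n}{t}^{-1}\sum_{|\{m\}|=t}\frac{|\{\epsilon\in\Sigma_{\{m\}}:\epsilon\text{ good for }\{m\}\}|}{|\Sigma_{\{m\}}|},$$ the sum over all $t$-element subsets $\{m\}$; this is the probability that a random error affecting $t$ randomly located qubits is corrected. *)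

theory Defs
  imports Complex_Main
begin

text \<open>An operator on n qubits is a complex matrix whose rows and columns are indexed by
  bit strings of length n (bit j of the string is the basis index of qubit j+1; False = |0>,
  True = |1>).  Entries at strings of any other length are 0.\<close>

type_synonym qmat1 = "bool \<Rightarrow> bool \<Rightarrow> complex"
type_synonym qmat = "bool list \<Rightarrow> bool list \<Rightarrow> complex"

definition pI :: qmat1 where "pI r c = (if r = c then 1 else 0)"
definition pX :: qmat1 where "pX r c = (if r \<noteq> c then 1 else 0)"
definition pY :: qmat1 where "pY r c = (if r = c then 0 else if r then -1 else 1)"
definition pZ :: qmat1 where "pZ r c = (if r = c then (if r then -1 else 1) else 0)"

definition tensor :: "qmat1 list \<Rightarrow> qmat" where
  "tensor Ms r c = (if length r = length Ms \<and> length c = length Ms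
      then (\<Prod>j<length Ms. (Ms ! j) (r ! j) (c ! j)) else 0)"

definition mmult :: "qmat \<Rightarrow> qmat \<Rightarrow> qmat" where
  "mmult A B r c = (\<Sum>k\<in>{k::bool list. length k = length r}. A r k * B k c)"

definition msmult :: "complex \<Rightarrow> qmat \<Rightarrow> qmat" where
  "msmult l A r c = l * A r c"

definition phases :: "complex set" where "phases = {1, -1, \<i>, -\<i>}"

definition pauli_group :: "nat \<Rightarrow> qmat set" where
  "pauli_group n = {msmult l (tensor Ms) | l Ms. l \<in> phases \<and> length Ms = n
      \<and> set Ms \<subseteq> {pI, pX, pY, pZ}}"

text \<open>The group generated by a (finite) list of n-qubit Pauli operators.  Since it is a
  subgroup of the finite group G^n, the closure under identity and products is the
  generated subgroup.\<close>
inductive_set gen_group :: "nat \<Rightarrow> qmat list \<Rightarrow> qmat set" for n gs where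
  gen_id: "tensor (replicate n pI) \<in> gen_group n gs"
| gen_gen: "g \<in> set gs \<Longrightarrow> g \<in> gen_group n gs"
| gen_mult: "a \<in> gen_group n gs \<Longrightarrow> b \<in> gen_group n gs \<Longrightarrow> mmult a b \<in> gen_group n gs"

definition syndrome :: "qmat list \<Rightarrow> qmat \<Rightarrow> bool list" where
  "syndrome gs g = map (\<lambda>h. mmult g h \<noteq> mmult h g) gs"

text \<open>P^{m}: tensor products that are I,X,Y,Z on the qubits in M (qubits numbered 1..n)
  and I elsewhere.\<close>
definition paulis_on :: "nat \<Rightarrow> nat set \<Rightarrow> qmat set" where
  "paulis_on n M = {tensor Ms | Ms. length Ms = n \<and>
      (\<forall>j<n. if Suc j \<in> M then Ms ! j \<in> {pI, pX, pY, pZ} else Ms ! j = pI)}"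

definition syndromes_on :: "nat \<Rightarrow> qmat list \<Rightarrow> nat set \<Rightarrow> bool list set" where
  "syndromes_on n gs M = syndrome gs ` paulis_on n M"

definition good :: "nat \<Rightarrow> qmat list \<Rightarrow> (bool list \<Rightarrow> qmat) \<Rightarrow> nat set \<Rightarrow> bool list \<Rightarrow> bool" where
  "good n gs \<phi> M \<epsilon> = (\<forall>g \<in> paulis_on n M. syndrome gs g = \<epsilon> \<longrightarrow>
      mmult (\<phi> \<epsilon>) g \<in> {msmult l s | l s. l \<in> phases \<and> s \<in> gen_group n gs})"

definition f_S :: "nat \<Rightarrow> qmat list \<Rightarrow> (bool list \<Rightarrow> qmat) \<Rightarrow> nat \<Rightarrow> real" where
  "f_S n gs \<phi> t = (1 / real (n choose t)) *
     (\<Sum>M\<in>{M. M \<subseteq> {1..n} \<and> card M = t}.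
        real (card {\<epsilon> \<in> syndromes_on n gs M. good n gs \<phi> M \<epsilon>})
        / real (card (syndromes_on n gs M)))"

definition letter :: "char \<Rightarrow> qmat1" where
  "letter ch = (if ch = CHR ''X'' then pX else if ch = CHR ''Y'' then pY
     else if ch = CHR ''Z'' then pZ else pI)"

definition pauli_str :: "string \<Rightarrow> qmat" where
  "pauli_str s = tensor (map letter s)"

definition steane_gens :: "qmat list" where
  "steane_gens = map pauli_str
     [''IIIXXXX'', ''IXXIIXX'', ''XIXIXIX'', ''IIIZZZZ'', ''IZZIIZZ'', ''ZIZIZIZ'']"

text \<open>Z_a (resp. X_b): Z (resp. X) on qubit a (resp. b), identity elsewhere; a = 0 gives I.\<close>
definition Zq :: "nat \<Rightarrow> qmat" where
  "Zq a = tensor (map (\<lambda>j. if Suc j = a then pZ else pI) [0..<7])"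
definition Xq :: "nat \<Rightarrow> qmat" where
  "Xq b = tensor (map (\<lambda>j. if Suc j = b then pX else pI) [0..<7])"

definition steane_phi :: "bool list \<Rightarrow> qmat" where
  "steane_phi e = mmult
     (Zq (4 * of_bool (e ! 0) + 2 * of_bool (e ! 1) + of_bool (e ! 2)))
     (Xq (4 * of_bool (e ! 3) + 2 * of_bool (e ! 4) + of_bool (e ! 5)))"

end

theory Submission
  imports Defs
begin

(*
  Write an n-qubit Pauli operator as P(x, z) = Z^z1 X^x1 (x) ... (x) Z^zn X^xn with x, z in F_2^n.
  Then P(x, z) P(x', z') = (-1)^(x.z') P(x + x', z + z'), so P(x, z) and P(x', z') commute iff
  x.z' = x'.z, and the group generated by Pauli operators P(v) is {+-P(w) : w in the span of the v}.
  For the Steane code this span is C x C, where C is the simplex code (the even-weight words of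
  the Hamming code), the syndrome of P(x, z) is the pair of Hamming syndromes of z and x, and phi
  flips the qubit whose number is the syndrome read in binary.  Hence phi corrects P(x, z) modulo
  the stabilizer iff the Hamming decoder corrects both x and z modulo C, which for a word w means
  parity w = (syndrome of w is nonzero).  The X and Z parts being independent, for every support M
  the fraction of good syndromes is the square of the corresponding fraction for classical errors
  supported in M; the values of f are then a finite computation over the 128 supports.
*)

section \<open>Binary vectors\<close>

definition vadd :: "bool list \<Rightarrow> bool list \<Rightarrow> bool list" where
  "vadd x y = map2 (\<noteq>) x y"

lemma vadd_simps [simp]:
  "vadd [] y = []" "vadd x [] = []" "vadd (a # x) (b # y) = (a \<noteq> b) # vadd x y"
  "length (vadd x y) = min (length x) (length y)"
  by (simp_all add: vadd_def)

lemma vadd_comm: "vadd x y = vadd y x"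
  by (induction x y rule: list_induct2') auto

lemma vadd_assoc: "vadd (vadd x y) w = vadd x (vadd y w)"
proof (induction x arbitrary: y w)
  case (Cons a x)
  then show ?case by (cases y; cases w) auto
qed simp

lemma vadd_zero [simp]:
  "length x = n \<Longrightarrow> vadd (replicate n False) x = x"
  "length x = n \<Longrightarrow> vadd x (replicate n False) = x"
  by (induction x arbitrary: n) auto

lemma vadd_self [simp]: "vadd x x = replicate (length x) False"
  by (induction x) auto

fun bdot :: "bool list \<Rightarrow> bool list \<Rightarrow> bool" where
  "bdot (a # x) (b # y) = ((a \<and> b) \<noteq> bdot x y)"
| "bdot _ _ = False"

lemma bdot_comm: "bdot x y = bdot y x"
  by (induction x y rule: bdot.induct) (auto elim: bdot.elims)

lemma bdot_zero_left [simp]: "bdot (replicate n False) x = False"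
proof (induction n arbitrary: x)
  case (Suc n)
  then show ?case by (cases x) auto
qed simp

lemma bdot_zero_right [simp]: "bdot x (replicate n False) = False"
  by (subst bdot_comm) simp

lemma bdot_vadd_left: "length x = length y \<Longrightarrow> bdot (vadd x y) w = (bdot x w \<noteq> bdot y w)"
proof (induction x y arbitrary: w rule: list_induct2)
  case (Cons a x b y)
  then show ?case by (cases w) auto
qed simp

lemma bdot_vadd_right: "length y = length w \<Longrightarrow> bdot x (vadd y w) = (bdot x y \<noteq> bdot x w)"
  by (simp add: bdot_comm[of x] bdot_vadd_left)

lemma eq_if_bdot_eq:
  "length z' = length z \<Longrightarrow> (\<And>r. length r = length z \<Longrightarrow> bdot r z = bdot r z') \<Longrightarrow> z = z'"
proof (induction z z' rule: list_induct2')
  case (4 a z b z')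
  have "a = b"
    using "4.prems"(2)[of "True # replicate (length z) False"] by simp
  moreover have "z = z'"
  proof (rule "4.IH")
    show "length z' = length z" using "4.prems"(1) by simp
    fix r :: "bool list" assume "length r = length z"
    then show "bdot r z = bdot r z'" using "4.prems"(2)[of "False # r"] by simp
  qed
  ultimately show ?case by simp
qed simp_all

fun parity :: "bool list \<Rightarrow> bool" where
  "parity [] = False"
| "parity (a # w) = (a \<noteq> parity w)"

lemma parity_vadd: "length x = length y \<Longrightarrow> parity (vadd x y) = (parity x \<noteq> parity y)"
  by (induction x y rule: list_induct2) auto

section \<open>Pauli operators in binary symplectic form\<close>

lemma msmult_1 [simp]: "msmult 1 A = A"
  by (simp add: fun_eq_iff msmult_def)

lemma msmult_msmult [simp]: "msmult a (msmult b A) = msmult (a * b) A"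
  by (simp add: fun_eq_iff msmult_def)

lemma mmult_msmult: "mmult (msmult a A) (msmult b B) = msmult (a * b) (mmult A B)"
  by (simp add: fun_eq_iff msmult_def mmult_def sum_distrib_left algebra_simps)

lemma tensor_Nil: "tensor [] r c = (if r = [] \<and> c = [] then 1 else 0)"
  by (simp add: tensor_def)

lemma tensor_Cons: "tensor (M # Ms) (a # r) (b # c) = M a b * tensor Ms r c"
  by (simp add: tensor_def prod.lessThan_Suc_shift del: prod.lessThan_Suc)

lemma finite_bool_lists: "finite {k :: bool list. length k = n}"
  using finite_lists_length_eq[of "UNIV :: bool set" n] by simp

definition sign :: "bool \<Rightarrow> complex" where
  "sign b = (if b then -1 else 1)"

lemma sign_nonzero [simp]: "sign b \<noteq> 0"
  by (simp add: sign_def)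

(* pauli1 a b is Z^b X^a; with the convention Y = ZX of the definitions, the four
   choices of a and b give I, X, Y, Z. *)
definition pauli1 :: "bool \<Rightarrow> bool \<Rightarrow> qmat1" where
  "pauli1 a b r c = (if c = (r \<noteq> a) then (if b \<and> r then -1 else 1) else 0)"

lemma pauli1_eqs:
  "pauli1 False False = pI" "pauli1 True False = pX" "pauli1 True True = pY" "pauli1 False True = pZ"
  by (auto simp: fun_eq_iff pauli1_def pI_def pX_def pY_def pZ_def)

lemma mem_single_paulis_iff: "P \<in> {pI, pX, pY, pZ} \<longleftrightarrow> (\<exists>a b. P = pauli1 a b)"
proof
  assume "\<exists>a b. P = pauli1 a b"
  then obtain a b where "P = pauli1 a b" by blast
  then show "P \<in> {pI, pX, pY, pZ}" by (cases a; cases b) (simp_all add: pauli1_eqs)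
qed (auto simp flip: pauli1_eqs)

definition pauli :: "bool list \<Rightarrow> bool list \<Rightarrow> qmat" where
  "pauli x z = tensor (map2 pauli1 x z)"

lemma tensor_replicate_pI: "tensor (replicate n pI) = pauli (replicate n False) (replicate n False)"
  by (simp add: pauli_def zip_replicate pauli1_eqs)

lemma pauli_apply:
  "length x = length z \<Longrightarrow>
    pauli x z r c = (if length r = length x \<and> c = vadd r x then sign (bdot r z) else 0)"
proof (induction x z arbitrary: r c rule: list_induct2)
  case Nil
  then show ?case by (simp add: pauli_def tensor_Nil sign_def)
next
  case (Cons a x b z)
  show ?case
  proof (cases r; cases c)
    fix h r' k c'
    assume "r = h # r'" "c = k # c'"
    then show ?thesis
      using Cons by (auto simp: pauli_def tensor_Cons pauli1_def sign_def)
  qed (auto simp: pauli_def tensor_def)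
qed

theorem mmult_pauli:
  assumes "length x = n" "length z = n" "length x' = n" "length z' = n"
  shows "mmult (pauli x z) (pauli x' z') = msmult (sign (bdot x z')) (pauli (vadd x x') (vadd z z'))"
proof (intro ext)
  fix r c :: "bool list"
  show "mmult (pauli x z) (pauli x' z') r c = msmult (sign (bdot x z')) (pauli (vadd x x') (vadd z z')) r c"
  proof (cases "length r = n")
    case False
    then show ?thesis using assms by (simp add: mmult_def msmult_def pauli_apply)
  next
    case True
    have "mmult (pauli x z) (pauli x' z') r c =
        (\<Sum>k\<in>{k. length k = n}. if k = vadd r x then sign (bdot r z) * pauli x' z' k c else 0)"
      unfolding mmult_def using True assms by (intro sum.cong) (auto simp: pauli_apply)
    also have "\<dots> = sign (bdot r z) * pauli x' z' (vadd r x) c"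
      using True assms by (simp add: finite_bool_lists)
    also have "\<dots> = msmult (sign (bdot x z')) (pauli (vadd x x') (vadd z z')) r c"
      using True assms
      by (simp add: pauli_apply msmult_def vadd_assoc bdot_vadd_left bdot_vadd_right sign_def)
    finally show ?thesis .
  qed
qed

lemma msmult_pauli_inj:
  assumes "l \<noteq> 0" "length x = n" "length z = n" "length x' = n" "length z' = n"
    and eq: "msmult l (pauli x z) = msmult l' (pauli x' z')"
  shows "x = x' \<and> z = z' \<and> l = l'"
proof -
  have entry: "l * sign (bdot r z) = l' * (if vadd r x = vadd r x' then sign (bdot r z') else 0)"
    if "length r = n" for r
    using fun_cong[OF fun_cong[OF eq, of r], of "vadd r x"] that assms(2-5)
    by (simp add: msmult_def pauli_apply)
  from entry[of "replicate n False"] have "l = l' * (if x = x' then 1 else 0)"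
    using assms(2,4) by (simp add: sign_def)
  with \<open>l \<noteq> 0\<close> have x: "x = x'" and l: "l = l'"
    by (auto split: if_splits)
  have "bdot r z = bdot r z'" if "length r = length z" for r
    using entry[of r] that x l \<open>l \<noteq> 0\<close> assms(3) by (simp add: sign_def split: if_splits)
  then have "z = z'"
    using assms(3,5) by (intro eq_if_bdot_eq) simp_all
  with x l show ?thesis by simp
qed

theorem pauli_commute_iff:
  assumes "length x = n" "length z = n" "length x' = n" "length z' = n"
  shows "mmult (pauli x z) (pauli x' z') = mmult (pauli x' z') (pauli x z) \<longleftrightarrow> bdot x z' = bdot x' z"
proof -
  have "mmult (pauli x z) (pauli x' z') = mmult (pauli x' z') (pauli x z) \<longleftrightarrow>
      msmult (sign (bdot x z')) (pauli (vadd x x') (vadd z z')) =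
      msmult (sign (bdot x' z)) (pauli (vadd x x') (vadd z z'))"
    using assms by (simp add: mmult_pauli vadd_comm[of x'] vadd_comm[of z'])
  also have "\<dots> \<longleftrightarrow> sign (bdot x z') = sign (bdot x' z)"
  proof
    have "length (vadd x x') = n" "length (vadd z z') = n"
      using assms by simp_all
    moreover assume "msmult (sign (bdot x z')) (pauli (vadd x x') (vadd z z')) =
      msmult (sign (bdot x' z)) (pauli (vadd x x') (vadd z z'))"
    ultimately show "sign (bdot x z') = sign (bdot x' z)"
      using msmult_pauli_inj[OF sign_nonzero] by blast
  qed simp
  also have "\<dots> \<longleftrightarrow> bdot x z' = bdot x' z"
    by (simp add: sign_def)
  finally show ?thesis .
qed

definition supported :: "nat \<Rightarrow> nat set \<Rightarrow> bool list set" where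
  "supported n M = {w. length w = n \<and> (\<forall>j<n. w ! j \<longrightarrow> Suc j \<in> M)}"

lemma paulis_onE:
  assumes "g \<in> paulis_on n M"
  obtains x z where "x \<in> supported n M" "z \<in> supported n M" "g = pauli x z"
proof -
  obtain Ms where g: "g = tensor Ms" "length Ms = n"
    and Ms: "\<forall>j<n. if Suc j \<in> M then Ms ! j \<in> {pI, pX, pY, pZ} else Ms ! j = pI"
    using assms by (auto simp: paulis_on_def)
  have "\<exists>ab. Ms ! j = pauli1 (fst ab) (snd ab) \<and> (Suc j \<notin> M \<longrightarrow> ab = (False, False))"
    if "j < n" for j
  proof (cases "Suc j \<in> M")
    case True
    then show ?thesis using Ms mem_single_paulis_iff[of "Ms ! j"] that by auto
  next
    case False
    then have "Ms ! j = pauli1 False False"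
      using Ms that by (simp add: pauli1_eqs)
    with False show ?thesis
      by (intro exI[of _ "(False, False)"]) simp
  qed
  then obtain f where f: "\<forall>j<n. Ms ! j = pauli1 (fst (f j)) (snd (f j)) \<and> (Suc j \<notin> M \<longrightarrow> f j = (False, False))"
    by metis
  define x where "x = map (\<lambda>j. fst (f j)) [0..<n]"
  define z where "z = map (\<lambda>j. snd (f j)) [0..<n]"
  have "Ms = map2 pauli1 x z"
    using f g(2) by (intro nth_equalityI) (auto simp: x_def z_def split: prod.split)
  moreover have "x \<in> supported n M" "z \<in> supported n M"
    using f by (auto simp: supported_def x_def z_def)
  ultimately show ?thesis
    using g(1) that by (simp add: pauli_def)
qed

lemma pauli_in_paulis_on:
  assumes "x \<in> supported n M" "z \<in> supported n M"
  shows "pauli x z \<in> paulis_on n M"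
proof -
  have "map2 pauli1 x z ! j \<in> {pI, pX, pY, pZ}" if "j < n" for j
    using that assms unfolding mem_single_paulis_iff by (auto simp: supported_def)
  moreover have "map2 pauli1 x z ! j = pI" if "j < n" "Suc j \<notin> M" for j
  proof -
    have "\<not> x ! j" "\<not> z ! j"
      using that assms by (auto simp: supported_def)
    then show ?thesis
      using that assms by (simp add: supported_def pauli1_eqs(1)[symmetric])
  qed
  moreover have "length (map2 pauli1 x z) = n"
    using assms by (simp add: supported_def)
  ultimately show ?thesis
    unfolding paulis_on_def pauli_def by (intro CollectI exI[of _ "map2 pauli1 x z"]) auto
qed

lemma paulis_on_eq: "paulis_on n M = (\<lambda>(x, z). pauli x z) ` (supported n M \<times> supported n M)"
proof (intro equalityI subsetI)
  fix g assume "g \<in> paulis_on n M"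
  then obtain x z where "x \<in> supported n M" "z \<in> supported n M" "g = pauli x z"
    by (rule paulis_onE)
  then show "g \<in> (\<lambda>(x, z). pauli x z) ` (supported n M \<times> supported n M)"
    by blast
qed (auto intro: pauli_in_paulis_on)

section \<open>Groups generated by Pauli operators\<close>

inductive_set symp_span :: "nat \<Rightarrow> (bool list \<times> bool list) list \<Rightarrow> (bool list \<times> bool list) set"
  for n vs where
  span_zero: "(replicate n False, replicate n False) \<in> symp_span n vs"
| span_gen: "v \<in> set vs \<Longrightarrow> v \<in> symp_span n vs"
| span_add: "(x, z) \<in> symp_span n vs \<Longrightarrow> (x', z') \<in> symp_span n vs \<Longrightarrow>
    (vadd x x', vadd z z') \<in> symp_span n vs"

lemma symp_span_length:
  assumes "\<forall>(x, z) \<in> set vs. length x = n \<and> length z = n" and "(x, z) \<in> symp_span n vs"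
  shows "length x = n \<and> length z = n"
  using assms(2) by (induction rule: symp_span.induct[split_format(complete)]) (use assms(1) in auto)

lemma gen_group_pauli_cases:
  assumes vs: "\<forall>(x, z) \<in> set vs. length x = n \<and> length z = n"
    and "s \<in> gen_group n (map (case_prod pauli) vs)"
  shows "\<exists>\<sigma> x z. \<sigma> \<in> {1, -1} \<and> (x, z) \<in> symp_span n vs \<and> s = msmult \<sigma> (pauli x z)"
  using assms(2)
proof induction
  case gen_id
  have "tensor (replicate n pI) = msmult 1 (pauli (replicate n False) (replicate n False))"
    by (simp add: tensor_replicate_pI)
  then show ?case
    using span_zero by blast
next
  case (gen_gen g)
  then obtain x z where "(x, z) \<in> set vs" "g = msmult 1 (pauli x z)"
    by auto
  then show ?case
    using span_gen by blast
next
  case (gen_mult a b)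
  then obtain \<sigma> x z \<tau> x' z' where
    a: "\<sigma> \<in> {1, -1}" "(x, z) \<in> symp_span n vs" "a = msmult \<sigma> (pauli x z)" and
    b: "\<tau> \<in> {1, -1}" "(x', z') \<in> symp_span n vs" "b = msmult \<tau> (pauli x' z')"
    by blast
  have "mmult a b = msmult (\<sigma> * \<tau> * sign (bdot x z')) (pauli (vadd x x') (vadd z z'))"
    using symp_span_length[OF vs a(2)] symp_span_length[OF vs b(2)]
    by (simp add: a(3) b(3) mmult_msmult mmult_pauli)
  moreover have "\<sigma> * \<tau> * sign (bdot x z') \<in> {1, -1}"
    using a(1) b(1) by (auto simp: sign_def)
  moreover have "(vadd x x', vadd z z') \<in> symp_span n vs"
    using a(2) b(2) by (rule span_add)
  ultimately show ?case
    by blast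
qed

lemma symp_span_in_gen_group:
  assumes vs: "\<forall>(x, z) \<in> set vs. length x = n \<and> length z = n"
    and "(x, z) \<in> symp_span n vs"
  shows "\<exists>\<sigma> \<in> {1, -1}. msmult \<sigma> (pauli x z) \<in> gen_group n (map (case_prod pauli) vs)"
  using assms(2)
proof (induction rule: symp_span.induct[split_format(complete)])
  case span_zero
  show ?case
    using gen_id[of n] by (simp add: tensor_replicate_pI)
next
  case (span_gen x z)
  then have "pauli x z \<in> gen_group n (map (case_prod pauli) vs)"
    by (intro gen_gen) (simp add: rev_image_eqI)
  then show ?case
    by (auto intro: bexI[of _ 1])
next
  case (span_add x z x' z')
  then obtain \<sigma> \<tau> where
    \<sigma>: "\<sigma> \<in> {1, -1}" "msmult \<sigma> (pauli x z) \<in> gen_group n (map (case_prod pauli) vs)" and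
    \<tau>: "\<tau> \<in> {1, -1}" "msmult \<tau> (pauli x' z') \<in> gen_group n (map (case_prod pauli) vs)"
    by blast
  have "mmult (msmult \<sigma> (pauli x z)) (msmult \<tau> (pauli x' z')) =
      msmult (\<sigma> * \<tau> * sign (bdot x z')) (pauli (vadd x x') (vadd z z'))"
    using symp_span_length[OF vs span_add.hyps(1)] symp_span_length[OF vs span_add.hyps(2)]
    by (simp add: mmult_msmult mmult_pauli)
  moreover have "mmult (msmult \<sigma> (pauli x z)) (msmult \<tau> (pauli x' z'))
      \<in> gen_group n (map (case_prod pauli) vs)"
    using \<sigma>(2) \<tau>(2) by (rule gen_mult)
  moreover have "\<sigma> * \<tau> * sign (bdot x z') \<in> {1, -1}"
    using \<sigma>(1) \<tau>(1) by (auto simp: sign_def)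
  ultimately show ?case
    by (intro bexI) simp_all
qed

theorem pauli_in_phase_group_iff:
  assumes vs: "\<forall>(x, z) \<in> set vs. length x = n \<and> length z = n"
    and "l \<in> phases" "length x = n" "length z = n"
  shows "msmult l (pauli x z) \<in>
      {msmult l' s | l' s. l' \<in> phases \<and> s \<in> gen_group n (map (case_prod pauli) vs)}
    \<longleftrightarrow> (x, z) \<in> symp_span n vs"
proof
  assume "msmult l (pauli x z) \<in>
      {msmult l' s | l' s. l' \<in> phases \<and> s \<in> gen_group n (map (case_prod pauli) vs)}"
  then obtain l' s where "s \<in> gen_group n (map (case_prod pauli) vs)"
      and l': "msmult l (pauli x z) = msmult l' s"
    by blast
  then obtain \<sigma> x' z' where "(x', z') \<in> symp_span n vs" "s = msmult \<sigma> (pauli x' z')"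
    using gen_group_pauli_cases[OF vs] by blast
  with l' have "(x', z') \<in> symp_span n vs" "msmult l (pauli x z) = msmult (l' * \<sigma>) (pauli x' z')"
    by simp_all
  moreover have "l \<noteq> 0"
    using \<open>l \<in> phases\<close> by (auto simp: phases_def)
  ultimately show "(x, z) \<in> symp_span n vs"
    using msmult_pauli_inj symp_span_length[OF vs] assms(3,4) by metis
next
  assume "(x, z) \<in> symp_span n vs"
  then obtain \<sigma> where \<sigma>: "\<sigma> \<in> {1, -1}"
      "msmult \<sigma> (pauli x z) \<in> gen_group n (map (case_prod pauli) vs)"
    using symp_span_in_gen_group[OF vs] by blast
  then have "msmult l (pauli x z) = msmult (l * \<sigma>) (msmult \<sigma> (pauli x z))"
    by auto
  moreover have "l * \<sigma> \<in> phases"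
    using \<sigma>(1) \<open>l \<in> phases\<close> by (auto simp: phases_def)
  ultimately show "msmult l (pauli x z) \<in>
      {msmult l' s | l' s. l' \<in> phases \<and> s \<in> gen_group n (map (case_prod pauli) vs)}"
    using \<sigma>(2) by blast
qed

lemma syndrome_pauli:
  assumes "\<forall>(x, z) \<in> set vs. length x = n \<and> length z = n" "length x = n" "length z = n"
  shows "syndrome (map (case_prod pauli) vs) (pauli x z) = map (\<lambda>(x', z'). bdot x z' \<noteq> bdot x' z) vs"
  using assms by (auto simp: syndrome_def pauli_commute_iff)

section \<open>The Steane code\<close>

(* Column j of this check matrix is j written in binary, most significant bit first; this
   is why a syndrome read as a binary number names the qubit to flip. *)
definition hamming_rows :: "bool list list" where
  "hamming_rows = [[False, False, False, True, True, True, True],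
                   [False, True, True, False, False, True, True],
                   [True, False, True, False, True, False, True]]"

definition steane_vecs :: "(bool list \<times> bool list) list" where
  "steane_vecs = map (\<lambda>p. (p, replicate 7 False)) hamming_rows @ map (\<lambda>p. (replicate 7 False, p)) hamming_rows"

lemma steane_vecs_length: "\<forall>(x, z) \<in> set steane_vecs. length x = 7 \<and> length z = 7"
  by (auto simp: steane_vecs_def hamming_rows_def)

lemma steane_gens_eq: "steane_gens = map (case_prod pauli) steane_vecs"
  by (simp add: steane_gens_def steane_vecs_def hamming_rows_def pauli_str_def pauli_def letter_def
      pauli1_eqs numeral_eq_Suc)

definition hamming_syndrome :: "bool list \<Rightarrow> bool list" where
  "hamming_syndrome w = map (\<lambda>p. bdot p w) hamming_rows"

lemma length_hamming_syndrome [simp]: "length (hamming_syndrome w) = 3"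
  by (simp add: hamming_syndrome_def hamming_rows_def)

lemma syndrome_steane:
  "length x = 7 \<Longrightarrow> length z = 7 \<Longrightarrow>
    syndrome steane_gens (pauli x z) = hamming_syndrome z @ hamming_syndrome x"
proof -
  assume "length x = 7" "length z = 7"
  then have "syndrome steane_gens (pauli x z) = map (\<lambda>(x', z'). bdot x z' \<noteq> bdot x' z) steane_vecs"
    unfolding steane_gens_eq by (rule syndrome_pauli[OF steane_vecs_length])
  then show ?thesis
    by (simp add: steane_vecs_def hamming_syndrome_def bdot_comm[of x])
qed

definition simplex_code :: "bool list set" where
  "simplex_code = {x. length x = 7 \<and> hamming_syndrome x = [False, False, False] \<and> \<not> parity x}"

lemma hamming_syndrome_vadd:
  "length x = 7 \<Longrightarrow> length y = 7 \<Longrightarrow>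
    hamming_syndrome (vadd x y) = vadd (hamming_syndrome x) (hamming_syndrome y)"
  by (simp add: hamming_syndrome_def hamming_rows_def bdot_vadd_right)

lemma simplex_code_vadd: "x \<in> simplex_code \<Longrightarrow> y \<in> simplex_code \<Longrightarrow> vadd x y \<in> simplex_code"
  by (simp add: simplex_code_def hamming_syndrome_vadd parity_vadd)

lemma zero_in_simplex_code: "replicate 7 False \<in> simplex_code"
  by (simp add: simplex_code_def hamming_syndrome_def hamming_rows_def numeral_eq_Suc)

lemma hamming_rows_in_simplex_code: "p \<in> set hamming_rows \<Longrightarrow> p \<in> simplex_code"
  by (auto simp: simplex_code_def hamming_rows_def hamming_syndrome_def)

lemma simplex_code_row_combination:
  assumes "x \<in> simplex_code"
  shows "x = vadd (vadd (if x ! 3 then hamming_rows ! 0 else replicate 7 False)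
                        (if x ! 1 then hamming_rows ! 1 else replicate 7 False))
                  (if x ! 0 then hamming_rows ! 2 else replicate 7 False)"
proof -
  obtain a0 a1 a2 a3 a4 a5 a6 where x: "x = [a0, a1, a2, a3, a4, a5, a6]"
    using assms by (auto simp: simplex_code_def numeral_eq_Suc length_Suc_conv)
  show ?thesis
    using assms unfolding x by (auto simp: simplex_code_def hamming_syndrome_def hamming_rows_def numeral_eq_Suc)
qed

lemma symp_span_steane_subset: "symp_span 7 steane_vecs \<subseteq> simplex_code \<times> simplex_code"
proof
  fix v assume "v \<in> symp_span 7 steane_vecs"
  then show "v \<in> simplex_code \<times> simplex_code"
  proof induction
    case span_zero
    then show ?case by (simp add: zero_in_simplex_code)
  next
    case (span_gen v)
    then show ?case
      by (auto simp: steane_vecs_def zero_in_simplex_code hamming_rows_in_simplex_code)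
  next
    case (span_add x z x' z')
    then show ?case by (simp add: simplex_code_vadd)
  qed
qed

lemma optional_row_in_symp_span_steane:
  assumes "i < 3"
  shows "(if a then hamming_rows ! i else replicate 7 False, replicate 7 False) \<in> symp_span 7 steane_vecs"
    and "(replicate 7 False, if a then hamming_rows ! i else replicate 7 False) \<in> symp_span 7 steane_vecs"
proof -
  have "hamming_rows ! i \<in> set hamming_rows"
    using assms by (intro nth_mem) (simp add: hamming_rows_def)
  then have "(hamming_rows ! i, replicate 7 False) \<in> set steane_vecs"
    "(replicate 7 False, hamming_rows ! i) \<in> set steane_vecs"
    by (auto simp: steane_vecs_def)
  then show "(if a then hamming_rows ! i else replicate 7 False, replicate 7 False) \<in> symp_span 7 steane_vecs"
    and "(replicate 7 False, if a then hamming_rows ! i else replicate 7 False) \<in> symp_span 7 steane_vecs"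
    by (auto intro: span_zero span_gen)
qed

lemma simplex_code_in_symp_span_steane:
  assumes "x \<in> simplex_code"
  shows "(x, replicate 7 False) \<in> symp_span 7 steane_vecs"
    and "(replicate 7 False, x) \<in> symp_span 7 steane_vecs"
proof -
  let ?zero = "replicate 7 False"
  let ?comb = "vadd (vadd (if x ! 3 then hamming_rows ! 0 else ?zero) (if x ! 1 then hamming_rows ! 1 else ?zero))
    (if x ! 0 then hamming_rows ! 2 else ?zero)"
  have "(?comb, vadd (vadd ?zero ?zero) ?zero) \<in> symp_span 7 steane_vecs"
    and "(vadd (vadd ?zero ?zero) ?zero, ?comb) \<in> symp_span 7 steane_vecs"
    by (intro span_add optional_row_in_symp_span_steane; simp)+
  then show "(x, ?zero) \<in> symp_span 7 steane_vecs" and "(?zero, x) \<in> symp_span 7 steane_vecs"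
    using simplex_code_row_combination[OF assms] by simp_all
qed

theorem symp_span_steane: "symp_span 7 steane_vecs = simplex_code \<times> simplex_code"
proof (intro equalityI subsetI)
  fix v assume "v \<in> simplex_code \<times> simplex_code"
  then obtain x z where v: "v = (x, z)" "x \<in> simplex_code" "z \<in> simplex_code"
    by blast
  then have "(vadd x (replicate 7 False), vadd (replicate 7 False) z) \<in> symp_span 7 steane_vecs"
    by (intro span_add simplex_code_in_symp_span_steane)
  then show "v \<in> symp_span 7 steane_vecs"
    using v by (simp add: simplex_code_def)
qed (use symp_span_steane_subset in blast)

(* unit_vec 0 is the zero word, matching Z_0 = X_0 = I. *)
definition unit_vec :: "nat \<Rightarrow> bool list" where
  "unit_vec a = map (\<lambda>j. Suc j = a) [0..<7]"

definition syndrome_index :: "bool list \<Rightarrow> nat" where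
  "syndrome_index s = 4 * of_bool (s ! 0) + 2 * of_bool (s ! 1) + of_bool (s ! 2)"

definition hamming_decode :: "bool list \<Rightarrow> bool list" where
  "hamming_decode s = unit_vec (syndrome_index s)"

lemma length_hamming_decode [simp]: "length (hamming_decode s) = 7"
  by (simp add: hamming_decode_def unit_vec_def)

lemma hamming_decode_correct:
  assumes "length s = 3"
  shows "hamming_syndrome (hamming_decode s) = s"
    and "parity (hamming_decode s) \<longleftrightarrow> s \<noteq> [False, False, False]"
proof -
  obtain a b c where "s = [a, b, c]"
    using assms by (auto simp: numeral_eq_Suc length_Suc_conv)
  then show "hamming_syndrome (hamming_decode s) = s"
    and "parity (hamming_decode s) \<longleftrightarrow> s \<noteq> [False, False, False]"
    by (cases a; cases b; cases c;
        simp add: hamming_decode_def unit_vec_def syndrome_index_def hamming_syndrome_def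
          hamming_rows_def upt_rec)+
qed

lemma steane_phi_eq:
  assumes "length s = 3" "length s' = 3"
  shows "steane_phi (s @ s') = pauli (hamming_decode s') (hamming_decode s)"
proof -
  have "Zq a = pauli (replicate 7 False) (unit_vec a)" "Xq a = pauli (unit_vec a) (replicate 7 False)"
    for a
    unfolding Zq_def Xq_def pauli_def
    by (rule arg_cong[of _ _ tensor], rule nth_equalityI, simp_all add: unit_vec_def pauli1_eqs)+
  then have "steane_phi (s @ s') =
      mmult (pauli (replicate 7 False) (hamming_decode s)) (pauli (hamming_decode s') (replicate 7 False))"
    using assms by (simp add: steane_phi_def hamming_decode_def syndrome_index_def nth_append)
  also have "\<dots> = pauli (hamming_decode s') (hamming_decode s)"
    by (simp add: mmult_pauli[of _ 7] sign_def)
  finally show ?thesis .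
qed

definition hamming_corrects :: "bool list \<Rightarrow> bool" where
  "hamming_corrects w \<longleftrightarrow> (parity w \<longleftrightarrow> hamming_syndrome w \<noteq> [False, False, False])"

lemma decode_residual_in_simplex_code_iff:
  assumes "length w = 7"
  shows "vadd (hamming_decode (hamming_syndrome w)) w \<in> simplex_code \<longleftrightarrow> hamming_corrects w"
proof -
  let ?d = "hamming_decode (hamming_syndrome w)"
  have "hamming_syndrome (vadd ?d w) = [False, False, False]"
    using assms by (simp add: hamming_syndrome_vadd hamming_decode_correct numeral_eq_Suc)
  moreover have "parity (vadd ?d w) \<longleftrightarrow> (hamming_syndrome w \<noteq> [False, False, False]) \<noteq> parity w"
    using assms by (simp add: parity_vadd hamming_decode_correct)
  ultimately show ?thesis
    using assms by (auto simp: simplex_code_def hamming_corrects_def)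
qed

theorem steane_correction_iff:
  assumes "length x = 7" "length z = 7"
  shows "mmult (steane_phi (syndrome steane_gens (pauli x z))) (pauli x z)
      \<in> {msmult l s | l s. l \<in> phases \<and> s \<in> gen_group 7 steane_gens}
    \<longleftrightarrow> hamming_corrects x \<and> hamming_corrects z"
proof -
  let ?dx = "hamming_decode (hamming_syndrome x)" and ?dz = "hamming_decode (hamming_syndrome z)"
  have product: "mmult (steane_phi (syndrome steane_gens (pauli x z))) (pauli x z) =
      msmult (sign (bdot ?dx z)) (pauli (vadd ?dx x) (vadd ?dz z))"
    using assms by (simp add: syndrome_steane steane_phi_eq mmult_pauli[of _ 7])
  have "msmult (sign (bdot ?dx z)) (pauli (vadd ?dx x) (vadd ?dz z))
      \<in> {msmult l s | l s. l \<in> phases \<and> s \<in> gen_group 7 (map (case_prod pauli) steane_vecs)}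
    \<longleftrightarrow> (vadd ?dx x, vadd ?dz z) \<in> symp_span 7 steane_vecs"
    using assms by (intro pauli_in_phase_group_iff[OF steane_vecs_length]) (simp_all add: sign_def phases_def)
  then show ?thesis
    unfolding product unfolding steane_gens_eq
    using assms by (simp add: symp_span_steane decode_residual_in_simplex_code_iff)
qed

definition decodable_syndrome :: "nat set \<Rightarrow> bool list \<Rightarrow> bool" where
  "decodable_syndrome M s \<longleftrightarrow> (\<forall>w \<in> supported 7 M. hamming_syndrome w = s \<longrightarrow> hamming_corrects w)"

lemma syndromes_on_steane:
  "syndromes_on 7 steane_gens M =
    (\<lambda>(s, s'). s @ s') ` (hamming_syndrome ` supported 7 M \<times> hamming_syndrome ` supported 7 M)"
proof -
  have "syndromes_on 7 steane_gens M =
      (\<lambda>(x, z). hamming_syndrome z @ hamming_syndrome x) ` (supported 7 M \<times> supported 7 M)"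
    unfolding syndromes_on_def paulis_on_eq image_image
    by (intro image_cong) (auto simp: syndrome_steane supported_def)
  also have "\<dots> = (\<lambda>(s, s'). s @ s') ` (hamming_syndrome ` supported 7 M \<times> hamming_syndrome ` supported 7 M)"
    by (auto simp: image_iff)
  finally show ?thesis .
qed

lemma good_steane_append_iff:
  assumes "s \<in> hamming_syndrome ` supported 7 M" "s' \<in> hamming_syndrome ` supported 7 M"
  shows "good 7 steane_gens steane_phi M (s @ s') \<longleftrightarrow> decodable_syndrome M s \<and> decodable_syndrome M s'"
proof -
  have "length s = 3"
    using assms(1) by auto
  have pointwise: "(syndrome steane_gens (pauli x z) = s @ s' \<longrightarrow>
        mmult (steane_phi (s @ s')) (pauli x z)
          \<in> {msmult l g | l g. l \<in> phases \<and> g \<in> gen_group 7 steane_gens}) \<longleftrightarrow>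
      (hamming_syndrome z = s \<and> hamming_syndrome x = s' \<longrightarrow> hamming_corrects x \<and> hamming_corrects z)"
    if "x \<in> supported 7 M" "z \<in> supported 7 M" for x z
  proof -
    have "length x = 7" "length z = 7"
      using that by (simp_all add: supported_def)
    then show ?thesis
      using steane_correction_iff[of x z] \<open>length s = 3\<close> by (auto simp: syndrome_steane)
  qed
  have "good 7 steane_gens steane_phi M (s @ s') \<longleftrightarrow>
      (\<forall>x \<in> supported 7 M. \<forall>z \<in> supported 7 M. hamming_syndrome z = s \<and> hamming_syndrome x = s' \<longrightarrow>
        hamming_corrects x \<and> hamming_corrects z)"
    unfolding good_def paulis_on_eq using pointwise by simp
  also have "\<dots> \<longleftrightarrow> decodable_syndrome M s \<and> decodable_syndrome M s'"
    using assms unfolding decodable_syndrome_def by blast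
  finally show ?thesis .
qed

theorem steane_good_fraction:
  "real (card {e \<in> syndromes_on 7 steane_gens M. good 7 steane_gens steane_phi M e})
      / real (card (syndromes_on 7 steane_gens M)) =
    (real (card {s \<in> hamming_syndrome ` supported 7 M. decodable_syndrome M s})
      / real (card (hamming_syndrome ` supported 7 M))) ^ 2"
proof -
  let ?H = "hamming_syndrome ` supported 7 M"
  let ?G = "{s \<in> ?H. decodable_syndrome M s}"
  let ?app = "(\<lambda>(s, s'). s @ s') :: bool list \<times> bool list \<Rightarrow> bool list"
  have inj: "inj_on ?app (?H \<times> ?H)"
    by (auto simp: inj_on_def)
  have "{e \<in> syndromes_on 7 steane_gens M. good 7 steane_gens steane_phi M e} = ?app ` (?G \<times> ?G)"
    unfolding syndromes_on_steane using good_steane_append_iff by auto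
  moreover have "inj_on ?app (?G \<times> ?G)"
    by (rule inj_on_subset[OF inj]) auto
  ultimately have "card {e \<in> syndromes_on 7 steane_gens M. good 7 steane_gens steane_phi M e} = card ?G * card ?G"
    by (simp add: card_image card_cartesian_product)
  moreover have "card (syndromes_on 7 steane_gens M) = card ?H * card ?H"
    unfolding syndromes_on_steane using inj by (simp add: card_image card_cartesian_product)
  ultimately show ?thesis
    by (simp add: power2_eq_square)
qed

section \<open>Counting over supports\<close>

definition mask_set :: "bool list \<Rightarrow> nat set" where
  "mask_set m = {Suc j | j. j < length m \<and> m ! j}"

lemma Suc_in_mask_set_iff: "Suc j \<in> mask_set m \<longleftrightarrow> j < length m \<and> m ! j"
  by (auto simp: mask_set_def)

lemma card_mask_set: "card (mask_set m) = length (filter id m)"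
proof -
  have "mask_set m = Suc ` {j. j < length m \<and> m ! j}"
    by (auto simp: mask_set_def)
  then show ?thesis
    by (simp add: card_image length_filter_conv_card)
qed

lemma bij_betw_mask_set: "bij_betw mask_set {m. length m = n} (Pow {1..n})"
proof (rule bij_betw_imageI)
  show "inj_on mask_set {m. length m = n}"
  proof (rule inj_onI)
    fix m m' assume "m \<in> {m. length m = n}" "m' \<in> {m. length m = n}" "mask_set m = mask_set m'"
    then show "m = m'"
      using Suc_in_mask_set_iff[of _ m] Suc_in_mask_set_iff[of _ m'] by (intro nth_equalityI) auto
  qed
  show "mask_set ` {m. length m = n} = Pow {1..n}"
  proof (intro equalityI subsetI)
    fix M assume "M \<in> mask_set ` {m. length m = n}"
    then show "M \<in> Pow {1..n}"
      by (auto simp: mask_set_def)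
  next
    fix M :: "nat set" assume M: "M \<in> Pow {1..n}"
    have "M = mask_set (map (\<lambda>j. Suc j \<in> M) [0..<n])"
    proof (intro equalityI subsetI)
      fix a assume "a \<in> M"
      with M have "a \<in> {1..n}"
        by blast
      with \<open>a \<in> M\<close> show "a \<in> mask_set (map (\<lambda>j. Suc j \<in> M) [0..<n])"
        by (cases a) (auto simp: Suc_in_mask_set_iff)
    qed (auto simp: mask_set_def)
    then show "M \<in> mask_set ` {m. length m = n}"
      by (intro rev_image_eqI) auto
  qed
qed

lemma sum_subsets_as_masks:
  "(\<Sum>M | M \<subseteq> {1..n} \<and> card M = t. f M) =
    (\<Sum>m\<leftarrow>List.n_lists n [False, True]. if length (filter id m) = t then f (mask_set m) else 0)"
proof -
  have "{M. M \<subseteq> {1..n} \<and> card M = t} = {M \<in> Pow {1..n}. card M = t}"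
    by blast
  then have "(\<Sum>M | M \<subseteq> {1..n} \<and> card M = t. f M) = (\<Sum>M\<in>Pow {1..n}. if card M = t then f M else 0)"
    by (simp only: sum.inter_filter[OF finite_Pow_iff[THEN iffD2, OF finite_atLeastAtMost]])
  also have "\<dots> = (\<Sum>m | length m = n. if length (filter id m) = t then f (mask_set m) else 0)"
    using sum.reindex_bij_betw[OF bij_betw_mask_set, of "\<lambda>M. if card M = t then f M else 0"]
    by (simp add: card_mask_set)
  also have "{m :: bool list. length m = n} = set (List.n_lists n [False, True])"
    by (auto simp: set_n_lists)
  also have "(\<Sum>m\<in>set (List.n_lists n [False, True]). if length (filter id m) = t then f (mask_set m) else 0) =
      (\<Sum>m\<leftarrow>List.n_lists n [False, True]. if length (filter id m) = t then f (mask_set m) else 0)"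
    by (simp add: sum_list_distinct_conv_sum_set distinct_n_lists)
  finally show ?thesis .
qed

definition below :: "bool list \<Rightarrow> bool list set" where
  "below m = {w. list_all2 (\<longrightarrow>) w m}"

lemma supported_mask_set: "supported (length m) (mask_set m) = below m"
  by (auto simp: supported_def below_def list_all2_conv_all_nth Suc_in_mask_set_iff)

lemma below_Nil: "below [] = {[]}"
  by (simp add: below_def)

lemma below_Cons: "below (b # m) = Cons False ` below m \<union> (if b then Cons True ` below m else {})"
  by (auto simp: below_def list_all2_Cons2 image_iff)

definition hamming_columns :: "bool list list" where
  "hamming_columns = [[False, False, True], [False, True, False], [False, True, True], [True, False, False],
                      [True, False, True], [True, True, False], [True, True, True]]"

fun colsum :: "bool list list \<Rightarrow> bool list \<Rightarrow> bool list" where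
  "colsum (c # cs) (b # w) = (if b then vadd c (colsum cs w) else colsum cs w)"
| "colsum _ _ = [False, False, False]"

lemma hamming_syndrome_colsum: "length w = 7 \<Longrightarrow> hamming_syndrome w = colsum hamming_columns w"
proof -
  assume "length w = 7"
  then obtain a0 a1 a2 a3 a4 a5 a6 where "w = [a0, a1, a2, a3, a4, a5, a6]"
    by (auto simp: numeral_eq_Suc length_Suc_conv)
  then show ?thesis
    by (simp add: hamming_syndrome_def hamming_rows_def hamming_columns_def)
qed

fun syndrome_parities :: "bool list list \<Rightarrow> bool list \<Rightarrow> (bool list \<times> bool) list" where
  "syndrome_parities (c # cs) (b # m) =
    (let L = syndrome_parities cs m
     in if b then remdups (L @ map (\<lambda>(s, p). (vadd c s, \<not> p)) L) else L)"
| "syndrome_parities _ _ = [([False, False, False], False)]"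

lemma set_syndrome_parities:
  "length cs = length m \<Longrightarrow> set (syndrome_parities cs m) = (\<lambda>w. (colsum cs w, parity w)) ` below m"
proof (induction cs m rule: list_induct2)
  case Nil
  then show ?case by (simp add: below_Nil)
next
  case (Cons c cs b m)
  then show ?case
    by (cases b) (auto simp: below_Cons image_Un image_image Let_def)
qed

(* A pair (s, s = 0) in the list witnesses an error below the mask with syndrome s and the
   wrong parity, so exactly the syndromes without such a pair are decodable. *)
definition decodable_fraction :: "bool list \<Rightarrow> real" where
  "decodable_fraction m =
    (let L = syndrome_parities hamming_columns m; S = remdups (map fst L)
     in real (length (filter (\<lambda>s. (s, s = [False, False, False]) \<notin> set L) S)) / real (length S))"

lemma decodable_fraction_eq:
  assumes "length m = 7"
  shows "real (card {s \<in> hamming_syndrome ` supported 7 (mask_set m). decodable_syndrome (mask_set m) s})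
      / real (card (hamming_syndrome ` supported 7 (mask_set m))) = decodable_fraction m"
proof -
  let ?L = "syndrome_parities hamming_columns m"
  have below: "supported 7 (mask_set m) = below m"
    using supported_mask_set[of m] assms by simp
  have len: "w \<in> below m \<Longrightarrow> length w = 7" for w
    using assms by (auto simp: below_def list_all2_lengthD)
  have L: "set ?L = (\<lambda>w. (hamming_syndrome w, parity w)) ` below m"
    using assms len by (simp add: set_syndrome_parities hamming_columns_def hamming_syndrome_colsum
        cong: image_cong)
  have H: "hamming_syndrome ` supported 7 (mask_set m) = set (remdups (map fst ?L))"
    by (simp add: L below image_image)
  have "decodable_syndrome (mask_set m) s \<longleftrightarrow> (s, s = [False, False, False]) \<notin> set ?L" for s
    by (auto simp: decodable_syndrome_def hamming_corrects_def below L)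
  then have G: "{s \<in> hamming_syndrome ` supported 7 (mask_set m). decodable_syndrome (mask_set m) s} =
      set (filter (\<lambda>s. (s, s = [False, False, False]) \<notin> set ?L) (remdups (map fst ?L)))"
    unfolding H by auto
  show ?thesis
    unfolding G unfolding H decodable_fraction_def Let_def
    by (simp only: distinct_card distinct_remdups distinct_filter)
qed

theorem f_S_steane:
  "f_S 7 steane_gens steane_phi t =
    (\<Sum>m\<leftarrow>List.n_lists 7 [False, True]. if length (filter id m) = t then decodable_fraction m ^ 2 else 0)
      / real (7 choose t)"
proof -
  have "f_S 7 steane_gens steane_phi t = (\<Sum>M | M \<subseteq> {1..7} \<and> card M = t.
      (real (card {s \<in> hamming_syndrome ` supported 7 M. decodable_syndrome M s})
        / real (card (hamming_syndrome ` supported 7 M))) ^ 2) / real (7 choose t)"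
    by (simp add: f_S_def steane_good_fraction)
  also have "\<dots> = (\<Sum>m\<leftarrow>List.n_lists 7 [False, True].
      if length (filter id m) = t then decodable_fraction m ^ 2 else 0) / real (7 choose t)"
    unfolding sum_subsets_as_masks
    by (intro arg_cong2[where f = "(/)"] arg_cong[where f = sum_list] map_cong)
      (simp_all add: decodable_fraction_eq set_n_lists)
  finally show ?thesis .
qed

lemma n_lists_7: "List.n_lists 7 xs = List.n_lists (Suc (Suc (Suc (Suc (Suc (Suc (Suc 0))))))) xs"
  by (simp add: numeral_eq_Suc)

lemma steane_mask_sums:
  defines "S t \<equiv> \<Sum>m\<leftarrow>List.n_lists 7 [False, True]. if length (filter id m) = t then decodable_fraction m ^ 2 else 0"
  shows "S 0 = 1" "S 1 = 7" "S 2 = 21 * 9 / 16" "S 3 = 35 * 5 / 16" "S 4 = 35 * 5 / 64"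
    "S 5 = 0" "S 6 = 0" "S 7 = 0"
  unfolding S_def n_lists_7
  by (simp_all add: decodable_fraction_def hamming_columns_def power2_eq_square)

lemma binomial_7:
  "(7 :: nat) choose 0 = 1" "(7 :: nat) choose 1 = 7" "(7 :: nat) choose 2 = 21" "(7 :: nat) choose 3 = 35"
  "(7 :: nat) choose 4 = 35" "(7 :: nat) choose 5 = 21" "(7 :: nat) choose 6 = 7" "(7 :: nat) choose 7 = 1"
  by (simp_all add: numeral_eq_Suc)

theorem mainTheorem3:
  shows "f_S 7 steane_gens steane_phi 0 = 1 \<and> f_S 7 steane_gens steane_phi 1 = 1
    \<and> f_S 7 steane_gens steane_phi 2 = 9 / 16 \<and> f_S 7 steane_gens steane_phi 3 = 5 / 16
    \<and> f_S 7 steane_gens steane_phi 4 = 5 / 64 \<and> f_S 7 steane_gens steane_phi 5 = 0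
    \<and> f_S 7 steane_gens steane_phi 6 = 0 \<and> f_S 7 steane_gens steane_phi 7 = 0"
  unfolding f_S_steane steane_mask_sums binomial_7 by simp

end
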